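(* Let $-\infty\le a<b\le+\infty$, $I=(a,b)$, $n\in\mathbb N$ with $n>1$, and let $\{I_j\}_{j=1}^n$ and $\{\widehat I_j\}_{j=1}^n$ be partitions in $\mathcal C_n(I)$. Then there exist indices $j_1,j_2\in\{1,\dots,n\}$ such that \[ I_{j_1}\subseteq \widehat I_{j_1}\qquad\text{and}\qquad \widehat I_{j_2}\subseteq I_{j_2}. \] Moreover, if $\{I_j\}$ and $\{\widehat I_j\}$ are distinct partitions, the indices can be chosen so that both inclusions are strict.
   Context: $\mathcal C_n(I)$ is the class of partitions $\{I_j\}_{j=1}^n$ of $I$ into open intervals $I_j=(x_{j-1},x_j)$, where $x_0:=a$, $x_n:=b$ and $x_{j-1}\le x_j$ for $1\le j\le n$ (some $I_j$ may be empty). *)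

theory Defs
  imports "HOL-Library.Extended_Real"
begin

definition open_ival :: "ereal \<Rightarrow> ereal \<Rightarrow> real set" where
  "open_ival x y = {t. x < ereal t \<and> ereal t < y}"

text \<open>Partition points of the class C_n(I), I = (a,b):
  x 0 = a, x n = b, x (j-1) \<le> x j for 1 \<le> j \<le> n.
  The j-th interval of the partition is I_j = open_ival (x (j-1)) (x j).\<close>
definition partition_pts :: "nat \<Rightarrow> ereal \<Rightarrow> ereal \<Rightarrow> (nat \<Rightarrow> ereal) \<Rightarrow> bool" where
  "partition_pts n a b x \<longleftrightarrow> x 0 = a \<and> x n = b \<and> (\<forall>j\<in>{1..n}. x (j - 1) \<le> x j)"

definition part_ival :: "(nat \<Rightarrow> ereal) \<Rightarrow> nat \<Rightarrow> real set" where
  "part_ival x j = open_ival (x (j - 1)) (x j)"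

end

theory Submission
  imports Defs
begin

text \<open>If the partition points differ, say x k < y k, then along 0..n the predicate
  x i < y i is false at 0, true at k and false at n, since both partitions share
  their endpoints. At the first switch (false to true) the x-interval sits strictly
  inside the y-interval with the right end moved; at the next switch back (true to
  false) the y-interval sits strictly inside the x-interval with the left end moved.\<close>

lemma open_ival_mono:
  assumes "c \<le> a" "b \<le> d"
  shows "open_ival a b \<subseteq> open_ival c d"
  using assms unfolding open_ival_def by (auto intro: le_less_trans less_le_trans)

lemma open_ival_psubset_upper:
  assumes "c \<le> a" "a \<le> b" "b < d"
  shows "open_ival a b \<subset> open_ival c d"
proof -
  obtain t where t: "b < ereal t" "ereal t < d" using ereal_dense2[OF assms(3)] by blast
  have "t \<in> open_ival c d" using t assms unfolding open_ival_def by (auto intro: le_less_trans)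
  moreover have "t \<notin> open_ival a b" using t unfolding open_ival_def by auto
  ultimately show ?thesis using open_ival_mono assms by (metis less_imp_le psubsetI)
qed

lemma open_ival_psubset_lower:
  assumes "c < a" "a \<le> b" "b \<le> d"
  shows "open_ival a b \<subset> open_ival c d"
proof -
  obtain t where t: "c < ereal t" "ereal t < a" using ereal_dense2[OF assms(1)] by blast
  have "t \<in> open_ival c d" using t assms unfolding open_ival_def by (auto intro: less_le_trans)
  moreover have "t \<notin> open_ival a b" using t unfolding open_ival_def by auto
  ultimately show ?thesis using open_ival_mono assms by (metis less_imp_le psubsetI)
qed

lemma nat_predicate_switch:
  fixes P :: "nat \<Rightarrow> bool"
  assumes "\<not> P m" "P k" "m \<le> k"
  shows "\<exists>j\<in>{m<..k}. \<not> P (j - 1) \<and> P j"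
  using assms
proof (induction k)
  case 0
  then show ?case by simp
next
  case (Suc k)
  have "m \<le> k" using Suc.prems by (metis le_SucE)
  show ?case
  proof (cases "P k")
    case True
    then obtain j where "j \<in> {m<..k}" "\<not> P (j - 1) \<and> P j"
      using Suc.IH Suc.prems(1) \<open>m \<le> k\<close> by blast
    then show ?thesis by auto
  next
    case False
    then show ?thesis using Suc.prems(2) \<open>m \<le> k\<close> by force
  qed
qed

lemma partition_pts_mono_step:
  assumes "partition_pts n a b u" "j \<in> {1..n}"
  shows "u (j - 1) \<le> u j"
  using assms unfolding partition_pts_def by blast

lemma partition_pts_psubset_both_ways:
  assumes u: "partition_pts n a b u" and v: "partition_pts n a b v"
    and "k \<le> n" "u k < v k"
  shows "\<exists>j1\<in>{1..n}. \<exists>j2\<in>{1..n}.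
           part_ival u j1 \<subset> part_ival v j1 \<and> part_ival v j2 \<subset> part_ival u j2"
proof -
  have ends: "u 0 = v 0" "u n = v n" using u v unfolding partition_pts_def by simp_all
  obtain j1 where j1: "j1 \<in> {0<..k}" "v (j1 - 1) \<le> u (j1 - 1)" "u j1 < v j1"
    using nat_predicate_switch[where P = "\<lambda>i. u i < v i" and m = 0 and k = k] assms ends
    by (auto simp: not_less)
  obtain j2 where j2: "j2 \<in> {k<..n}" "u (j2 - 1) < v (j2 - 1)" "v j2 \<le> u j2"
    using nat_predicate_switch[where P = "\<lambda>i. \<not> u i < v i" and m = k and k = n] assms ends
    by (auto simp: not_less)
  have "j1 \<in> {1..n}" "j2 \<in> {1..n}" using j1(1) j2(1) \<open>k \<le> n\<close> by auto
  moreover have "part_ival u j1 \<subset> part_ival v j1"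
    unfolding part_ival_def
    using j1 partition_pts_mono_step[OF u \<open>j1 \<in> {1..n}\<close>] by (intro open_ival_psubset_upper)
  moreover have "part_ival v j2 \<subset> part_ival u j2"
    unfolding part_ival_def
    using j2 partition_pts_mono_step[OF v \<open>j2 \<in> {1..n}\<close>] by (intro open_ival_psubset_lower)
  ultimately show ?thesis by blast
qed

lemma part_ival_eq_if_pts_eq:
  assumes "\<forall>i\<le>n. x i = y i" "j \<in> {1..n}"
  shows "part_ival x j = part_ival y j"
  using assms unfolding part_ival_def by (metis atLeastAtMost_iff diff_le_self le_trans)

theorem lemma2p12:
  fixes a b :: ereal and n :: nat and x y :: "nat \<Rightarrow> ereal"
  assumes "a < b" and "n > 1"
    and "partition_pts n a b x" and "partition_pts n a b y"
  shows "(\<exists>j1\<in>{1..n}. \<exists>j2\<in>{1..n}.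
            part_ival x j1 \<subseteq> part_ival y j1 \<and> part_ival y j2 \<subseteq> part_ival x j2)
       \<and> ((\<exists>j\<in>{1..n}. part_ival x j \<noteq> part_ival y j) \<longrightarrow>
          (\<exists>j1\<in>{1..n}. \<exists>j2\<in>{1..n}.
            part_ival x j1 \<subset> part_ival y j1 \<and> part_ival y j2 \<subset> part_ival x j2))"
    (is "_ \<and> (_ \<longrightarrow> ?strict)")
proof -
  consider (eq) "\<forall>i\<le>n. x i = y i" | (neq) k where "k \<le> n" "x k \<noteq> y k" by blast
  then show ?thesis
  proof cases
    case eq
    then have "part_ival x 1 = part_ival y 1" "\<forall>j\<in>{1..n}. part_ival x j = part_ival y j"
      using part_ival_eq_if_pts_eq \<open>n > 1\<close> by auto
    then show ?thesis using \<open>n > 1\<close> by auto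
  next
    case neq
    then have ?strict
      using partition_pts_psubset_both_ways[OF assms(3,4)]
        partition_pts_psubset_both_ways[OF assms(4,3)]
      by (metis linorder_neqE)
    then show ?thesis by blast
  qed
qed

end
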